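(* Let $F$ be a finite extension of $\mathbf{Q}_p$, $K$ a finite unramified extension of $F$ of degree $h$, $\alpha\in\mathcal{O}_F$ with $v_F(\alpha)=h$, $S$ a relative Lubin–Tate group relative to $K/F$ attached to $\alpha$, $K_\infty$ the extension of $K$ generated by the torsion points of $S$, and $\chi_\alpha:\mathrm{Gal}(K_\infty/K)\xrightarrow{\sim}\mathcal{O}_F^\times$ the associated character. Let $L\subset K_\infty$ be an extension of $K$ with $K_\infty/L$ finite Galois, let $W=\mathrm{Gal}(K_\infty/L)$, $d=|W|$, and identify $W$ with $\chi_\alpha(W)$, the group of $d$-th roots of unity in $\mathcal{O}_F^\times$. Put $R(T)=\prod_{w\in\chi_\alpha(W)}[w](T)$. Then for every $a\in\mathcal{O}_F$ there exists a unique power series $\Gamma_a\in K[[T]]$ such that $$\Gamma_a\circ R=R\circ[a]=\prod_{w\in\chi_\alpha(W)}[a]\circ[w].$$ Moreover $\Gamma_a\circ\Gamma_b=\Gamma_{ab}$ for all $a,b\in\mathcal{O}_F$, and $\Gamma_a'(0)=a^d$.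
   Context: Relative Lubin–Tate group (de Shalit): with $\phi$ the Frobenius of $K/F$ acting on coefficients, choose $f\in\mathcal{O}_K[[T]]$ with $f=\pi T+O(T^2)$, $N_{K/F}(\pi)=\alpha$, $f\equiv T^{|k_F|}\bmod\mathfrak{m}_K$; $S$ is the unique formal group law over $\mathcal{O}_K$ with $S^{\phi}\circ f=f\circ S$. For $a\in\mathcal{O}_F$, $[a]\in\mathcal{O}_K[[T]]$ is the unique endomorphism of $S$ with $[a](T)=aT+O(T^2)$. Torsion points are the roots in $\mathfrak{m}_{\mathbf{C}_p}$ of the iterates of $[\alpha]$; $\chi_\alpha(g)$ is defined by $g(\lambda)=[\chi_\alpha(g)](\lambda)$ for all torsion points $\lambda$, and it gives an isomorphism $\mathrm{Gal}(K_\infty/K)\simeq\mathcal{O}_F^\times$. *)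

theory Defs
  imports "HOL-Computational_Algebra.Formal_Power_Series"
begin

definition roots_of_unity :: "'a::field set \<Rightarrow> nat \<Rightarrow> 'a set" where
  "roots_of_unity OF d = {w \<in> OF. w ^ d = 1}"

definition R_series :: "('a::field \<Rightarrow> 'a fps) \<Rightarrow> 'a set \<Rightarrow> nat \<Rightarrow> 'a fps" where
  "R_series brk OF d = (\<Prod>w\<in>roots_of_unity OF d. brk w)"

definition Gamma :: "('a::field \<Rightarrow> 'a fps) \<Rightarrow> 'a set \<Rightarrow> nat \<Rightarrow> 'a \<Rightarrow> 'a fps" where
  "Gamma brk OF d a = (THE G. fps_compose G (R_series brk OF d) = fps_compose (R_series brk OF d) (brk a))"

end

(* The series [w], w a d-th root of unity, form a group of order d under composition. It fixes R,
   and also R o [a] because [a] commutes with every [w]. The average lin = (1/d) sum w^-1 [w]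
   satisfies lin o [w] = w lin, so in the coordinate lin the group acts by the rotations T -> w T;
   a rotation-invariant series involves only the powers T^(n d), so every invariant series is a
   series in lin^d. R itself is one with nonzero coefficient of lin^d (R has order exactly d), so
   that series can be inverted and every invariant series is a series in R. Uniqueness holds because
   composition with a nonzero series without constant term is injective; the rules for Gamma follow
   from uniqueness and from comparing coefficients of T^d. *)

theory Submission
  imports Defs "HOL-Computational_Algebra.Polynomial"
begin

unbundle fps_syntax

lemma
  fixes n :: nat
  assumes "0 < n"
  shows finite_roots_unity_idom: "finite {z :: 'a::idom. z ^ n = 1}"
    and card_roots_unity_idom: "card {z :: 'a::idom. z ^ n = 1} \<le> n"
proof -
  define p :: "'a poly" where "p = monom 1 n - 1"
  have roots: "{z. z ^ n = 1} = {z. poly p z = 0}"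
    by (simp add: p_def poly_monom)
  have "p \<noteq> 0"
  proof
    assume "p = 0"
    then have "poly p 0 = 0" by simp
    then show False using assms by (simp add: p_def poly_monom power_0_left)
  qed
  then show "finite {z :: 'a. z ^ n = 1}"
    unfolding roots by (rule poly_roots_finite)
  have "card {z. poly p z = 0} \<le> degree p"
    using \<open>p \<noteq> 0\<close> by (rule card_poly_roots_bound)
  also have "degree p \<le> n"
    unfolding p_def by (intro degree_diff_le degree_monom_le) simp_all
  finally show "card {z :: 'a. z ^ n = 1} \<le> n"
    unfolding roots .
qed

lemma dvd_if_roots_of_unity_power_eq_1:
  assumes "0 < d" and card: "card (roots_of_unity A d) = d"
    and pow: "\<forall>w\<in>roots_of_unity A d. w ^ n = 1"
  shows "d dvd n"
proof (rule ccontr)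
  assume "\<not> d dvd n"
  then have pos: "0 < n mod d"
    by (simp add: mod_greater_zero_iff_not_dvd)
  have "roots_of_unity A d \<subseteq> {z. z ^ (n mod d) = 1}"
  proof
    fix w assume w: "w \<in> roots_of_unity A d"
    then have "w ^ d = 1" by (simp add: roots_of_unity_def)
    then have "w ^ n = w ^ (n mod d)"
      by (metis div_mult_mod_eq power_add power_mult mult.commute power_one mult_1)
    then show "w \<in> {z. z ^ (n mod d) = 1}" using pow w by simp
  qed
  then have "d \<le> card {z :: 'a. z ^ (n mod d) = 1}"
    using card by (metis card_mono finite_roots_unity_idom[OF pos])
  also have "\<dots> \<le> n mod d"
    using pos by (rule card_roots_unity_idom)
  also have "\<dots> < d"
    using \<open>0 < d\<close> by simp
  finally show False by simp
qed

lemma fps_compose_X_power_nth: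
  fixes h :: "'a::comm_ring_1 fps"
  assumes "0 < d"
  shows "(h oo fps_X ^ d) $ n = (if d dvd n then h $ (n div d) else 0)"
proof -
  have "(h oo fps_X ^ d) $ n = (\<Sum>i=0..n. h $ i * (if n = d * i then 1 else 0))"
    by (simp add: fps_compose_nth power_mult[symmetric])
  also have "\<dots> = (\<Sum>i=0..n. if d dvd n \<and> i = n div d then h $ i else 0)"
    using assms by (intro sum.cong) auto
  also have "\<dots> = (if d dvd n then h $ (n div d) else 0)"
    using assms by (auto simp: div_le_dividend)
  finally show ?thesis .
qed

lemma fps_compose_X_power_if_roots_of_unity_invariant:
  fixes f :: "'a::field fps"
  assumes "0 < d" and card: "card (roots_of_unity A d) = d"
    and inv: "\<forall>w\<in>roots_of_unity A d. f oo (fps_const w * fps_X) = f"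
  shows "f = Abs_fps (\<lambda>m. f $ (m * d)) oo fps_X ^ d"
proof (rule fps_ext)
  fix n
  have "f $ n = 0" if "\<not> d dvd n"
  proof (rule ccontr)
    assume "f $ n \<noteq> 0"
    have "\<forall>w\<in>roots_of_unity A d. w ^ n = 1"
    proof
      fix w assume "w \<in> roots_of_unity A d"
      then have "w ^ n * f $ n = f $ n"
        using inv fps_nth_compose_linear[of f w n] by simp
      then show "w ^ n = 1" using \<open>f $ n \<noteq> 0\<close> by simp
    qed
    then show False using dvd_if_roots_of_unity_power_eq_1 assms that by blast
  qed
  then show "f $ n = (Abs_fps (\<lambda>m. f $ (m * d)) oo fps_X ^ d) $ n"
    using assms by (auto simp: fps_compose_X_power_nth)
qed

lemma fps_compose_nth_subdegree_inner:
  fixes f g :: "'a::idom fps"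
  assumes "subdegree g \<noteq> 0"
  shows "(f oo g) $ subdegree g = f $ 1 * g $ subdegree g"
proof -
  let ?k = "subdegree g"
  have "(f oo g) $ ?k = (\<Sum>i\<in>{0..?k}. f $ i * (g ^ i) $ ?k)"
    by (rule fps_compose_nth)
  also have "\<dots> = (\<Sum>i\<in>{1}. f $ i * (g ^ i) $ ?k)"
  proof (rule sum.mono_neutral_right)
    show "\<forall>i\<in>{0..?k} - {1}. f $ i * (g ^ i) $ ?k = 0"
    proof
      fix i assume i: "i \<in> {0..?k} - {1}"
      show "f $ i * (g ^ i) $ ?k = 0"
      proof (cases "i = 0")
        case False
        then have "?k < i * subdegree g" using i assms by auto
        then show ?thesis by (simp add: fps_pow_nth_below_subdegree)
      qed (use assms in simp)
    qed
  qed (use assms in auto)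
  finally show ?thesis by simp
qed

lemma fps_compose_nth_subdegree_outer:
  fixes f g :: "'a::idom fps"
  assumes "g $ 0 = 0"
  shows "(f oo g) $ subdegree f = f $ subdegree f * (g $ 1) ^ subdegree f"
proof -
  let ?k = "subdegree f"
  have "(f oo g) $ ?k = (\<Sum>i\<in>{0..?k}. f $ i * (g ^ i) $ ?k)"
    by (rule fps_compose_nth)
  also have "\<dots> = (\<Sum>i\<in>{?k}. f $ i * (g ^ i) $ ?k)"
    by (rule sum.mono_neutral_right) (auto simp: nth_less_subdegree_zero)
  finally show ?thesis
    using startsby_zero_power_nth_same[OF assms] by simp
qed

lemma fps_compose_right_cancel:
  fixes f1 f2 g :: "'a::idom fps"
  assumes "g $ 0 = 0" "g \<noteq> 0" "f1 oo g = f2 oo g"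
  shows "f1 = f2"
proof -
  have "(f1 - f2) oo g = 0"
    using assms(3) by (simp add: fps_compose_sub_distrib)
  then show ?thesis
    using assms(1,2) by (simp add: fps_compose_eq_0_iff)
qed

lemma fps_compose_through_inverse:
  fixes k h y :: "'a::field fps"
  assumes "y $ 0 = 0" "h $ 0 = 0" "h $ 1 \<noteq> 0"
  shows "k oo y = (k oo fps_inv h) oo (h oo y)"
proof -
  have inv0: "fps_inv h $ 0 = 0" by (simp add: fps_inv_def)
  have "(k oo fps_inv h) oo (h oo y) = k oo (fps_inv h oo (h oo y))"
    using assms inv0 by (simp add: fps_compose_assoc)
  also have "fps_inv h oo (h oo y) = (fps_inv h oo h) oo y"
    using assms by (simp add: fps_compose_assoc)
  also have "\<dots> = y"
    using assms by (simp add: fps_inv)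
  finally show ?thesis ..
qed

locale formal_endomorphism_family =
  fixes OF :: "'a::field_char_0 set" and brk :: "'a \<Rightarrow> 'a fps" and d :: nat
  assumes one_mem: "1 \<in> OF"
    and mult_mem: "a \<in> OF \<Longrightarrow> b \<in> OF \<Longrightarrow> a * b \<in> OF"
    and brk_nth_0: "a \<in> OF \<Longrightarrow> brk a $ 0 = 0"
    and brk_nth_1: "a \<in> OF \<Longrightarrow> brk a $ 1 = a"
    and brk_mult: "a \<in> OF \<Longrightarrow> b \<in> OF \<Longrightarrow> brk (a * b) = brk a oo brk b"
    and d_pos: "0 < d"
    and card_mu: "card (roots_of_unity OF d) = d"
begin

abbreviation \<mu> :: "'a set" where "\<mu> \<equiv> roots_of_unity OF d"
abbreviation R :: "'a fps" where "R \<equiv> R_series brk OF d"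
abbreviation \<Gamma> :: "'a \<Rightarrow> 'a fps" where "\<Gamma> \<equiv> Gamma brk OF d"

lemma mu_mem: "w \<in> \<mu> \<Longrightarrow> w \<in> OF"
  and mu_power: "w \<in> \<mu> \<Longrightarrow> w ^ d = 1"
  by (simp_all add: roots_of_unity_def)

lemma mu_nonzero: "w \<in> \<mu> \<Longrightarrow> w \<noteq> 0"
  using mu_power[of w] d_pos by (cases "w = 0") (simp_all add: power_0_left)

lemma power_mem: "a \<in> OF \<Longrightarrow> a ^ n \<in> OF"
  by (induction n) (simp_all add: one_mem mult_mem)

lemma mu_mult: "v \<in> \<mu> \<Longrightarrow> w \<in> \<mu> \<Longrightarrow> v * w \<in> \<mu>"
  by (simp add: roots_of_unity_def mult_mem power_mult_distrib)

lemma mu_inverse: "w \<in> \<mu> \<Longrightarrow> inverse w \<in> \<mu>"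
proof -
  assume w: "w \<in> \<mu>"
  have "w * w ^ (d - 1) = w ^ d"
    using d_pos by (metis Suc_diff_1 power_Suc)
  then have "inverse w = w ^ (d - 1)"
    using mu_power[OF w] by (intro inverse_unique) simp
  then have "inverse w \<in> OF"
    using power_mem[OF mu_mem[OF w]] by simp
  moreover have "inverse w ^ d = 1"
    using mu_power[OF w] by (simp add: power_inverse)
  ultimately show ?thesis
    by (simp add: roots_of_unity_def)
qed

lemma bij_betw_mult_right_mu: "v \<in> \<mu> \<Longrightarrow> bij_betw (\<lambda>w. w * v) \<mu> \<mu>"
  by (rule bij_betwI[where g = "\<lambda>w. w * inverse v"])
    (auto simp: mu_mult mu_inverse mu_nonzero)

lemma brk_commute: "a \<in> OF \<Longrightarrow> b \<in> OF \<Longrightarrow> brk a oo brk b = brk b oo brk a"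
  by (metis brk_mult mult.commute)

lemma subdegree_R: "subdegree R = d"
proof -
  have "subdegree (brk w) = 1" if w: "w \<in> \<mu>" for w
  proof (rule subdegreeI)
    show "brk w $ 1 \<noteq> 0"
      using brk_nth_1[OF mu_mem[OF w]] mu_nonzero[OF w] by simp
    show "brk w $ i = 0" if "i < 1" for i
      using that w by (simp add: brk_nth_0 mu_mem)
  qed
  moreover have "brk w \<noteq> 0" if "w \<in> \<mu>" for w
    using that by (metis brk_nth_1 fps_zero_nth mu_mem mu_nonzero)
  ultimately show ?thesis
    unfolding R_series_def using card_mu by (simp add: subdegree_prod)
qed

lemma R_nth_0: "R $ 0 = 0"
  by (rule nth_less_subdegree_zero) (simp add: subdegree_R d_pos)

lemma R_nonzero: "R \<noteq> 0"
  using d_pos by (metis subdegree_R subdegree_0 less_irrefl)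

lemma R_compose_brk_mu: "v \<in> \<mu> \<Longrightarrow> R oo brk v = R"
proof -
  assume v: "v \<in> \<mu>"
  have "R oo brk v = (\<Prod>w\<in>\<mu>. brk w oo brk v)"
    unfolding R_series_def using v by (simp add: fps_compose_prod_distrib brk_nth_0 mu_mem)
  also have "\<dots> = (\<Prod>w\<in>\<mu>. brk (w * v))"
    using v by (intro prod.cong) (simp_all add: brk_mult mu_mem)
  also have "\<dots> = R"
    unfolding R_series_def using prod.reindex_bij_betw[OF bij_betw_mult_right_mu[OF v]] .
  finally show ?thesis .
qed

lemma R_compose_brk:
  assumes a: "a \<in> OF"
  shows "R oo brk a = (\<Prod>w\<in>\<mu>. brk a oo brk w)"
proof -
  have "R oo brk a = (\<Prod>w\<in>\<mu>. brk w oo brk a)"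
    unfolding R_series_def using a by (simp add: fps_compose_prod_distrib brk_nth_0)
  also have "\<dots> = (\<Prod>w\<in>\<mu>. brk a oo brk w)"
    using a by (intro prod.cong refl brk_commute) (simp_all add: mu_mem)
  finally show ?thesis .
qed

lemma R_compose_brk_invariant:
  assumes a: "a \<in> OF" and v: "v \<in> \<mu>"
  shows "(R oo brk a) oo brk v = R oo brk a"
proof -
  have v0: "brk v $ 0 = 0" and a0: "brk a $ 0 = 0"
    using a v by (simp_all add: brk_nth_0 mu_mem)
  have "(R oo brk a) oo brk v = R oo (brk a oo brk v)"
    using a0 v0 by (simp add: fps_compose_assoc)
  also have "\<dots> = R oo (brk v oo brk a)"
    using brk_commute[OF a mu_mem[OF v]] by simp
  also have "\<dots> = (R oo brk v) oo brk a"
    using a0 v0 by (simp add: fps_compose_assoc)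
  also have "\<dots> = R oo brk a"
    using v by (simp add: R_compose_brk_mu)
  finally show ?thesis .
qed

definition lin :: "'a fps" where
  "lin = fps_const (inverse (of_nat d)) * (\<Sum>w\<in>\<mu>. fps_const (inverse w) * brk w)"

lemma lin_nth_0: "lin $ 0 = 0"
  by (simp add: lin_def fps_sum_nth brk_nth_0 mu_mem)

lemma lin_nth_1: "lin $ 1 = 1"
proof -
  have "(\<Sum>w\<in>\<mu>. fps_const (inverse w) * brk w) $ 1 = (\<Sum>w\<in>\<mu>. 1)"
    unfolding fps_sum_nth
  proof (intro sum.cong refl)
    fix w assume w: "w \<in> \<mu>"
    show "(fps_const (inverse w) * brk w) $ 1 = 1"
      using brk_nth_1[OF mu_mem[OF w]] mu_nonzero[OF w] by simp
  qed
  then show ?thesis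
    using card_mu d_pos by (simp add: lin_def)
qed

lemma lin_compose_brk:
  assumes v: "v \<in> \<mu>"
  shows "lin oo brk v = fps_const v * lin"
proof -
  have v0: "brk v $ 0 = 0"
    using v by (simp add: brk_nth_0 mu_mem)
  have "(\<Sum>w\<in>\<mu>. fps_const (inverse w) * (brk w oo brk v))
      = (\<Sum>w\<in>\<mu>. fps_const v * (fps_const (inverse (w * v)) * brk (w * v)))"
  proof (intro sum.cong refl)
    fix w assume w: "w \<in> \<mu>"
    have "fps_const (inverse w) = fps_const v * fps_const (inverse (w * v))"
      using v w by (simp add: mu_nonzero field_simps)
    moreover have "brk w oo brk v = brk (w * v)"
      using v w by (simp add: brk_mult mu_mem)
    ultimately show "fps_const (inverse w) * (brk w oo brk v)
        = fps_const v * (fps_const (inverse (w * v)) * brk (w * v))"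
      by (simp only: mult.assoc)
  qed
  also have "\<dots> = fps_const v * (\<Sum>w\<in>\<mu>. fps_const (inverse (w * v)) * brk (w * v))"
    by (simp only: sum_distrib_left)
  also have "(\<Sum>w\<in>\<mu>. fps_const (inverse (w * v)) * brk (w * v))
      = (\<Sum>w\<in>\<mu>. fps_const (inverse w) * brk w)"
    by (rule sum.reindex_bij_betw[OF bij_betw_mult_right_mu[OF v]])
  finally show ?thesis
    unfolding lin_def using v0
    by (simp add: fps_compose_mult_distrib fps_compose_sum_distrib mult.left_commute)
qed

lemma subdegree_lin: "subdegree lin = 1"
  using lin_nth_0 lin_nth_1 by (intro subdegreeI) (auto simp: less_Suc_eq)

lemma fps_inv_lin_compose_lin: "fps_inv lin oo lin = fps_X"
  and lin_compose_fps_inv_lin: "lin oo fps_inv lin = fps_X"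
  using fps_inv[OF lin_nth_0] fps_inv_right[OF lin_nth_0] lin_nth_1 by simp_all

lemma fps_inv_lin_nth_0: "fps_inv lin $ 0 = 0"
  by (simp add: fps_inv_def)

lemma invariant_compose_fps_inv_lin:
  assumes inv: "\<forall>v\<in>\<mu>. f oo brk v = f" and v: "v \<in> \<mu>"
  shows "(f oo fps_inv lin) oo (fps_const v * fps_X) = f oo fps_inv lin"
proof -
  let ?\<psi> = "fps_inv lin"
  have v0: "brk v $ 0 = 0"
    using v by (simp add: brk_nth_0 mu_mem)
  have "fps_const v * fps_X = (fps_const v * lin) oo ?\<psi>"
    using fps_inv_lin_nth_0 by (simp add: fps_compose_mult_distrib lin_compose_fps_inv_lin)
  also have "\<dots> = lin oo (brk v oo ?\<psi>)"
    using fps_inv_lin_nth_0 v0 by (simp add: fps_compose_assoc lin_compose_brk[OF v])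
  finally have "(f oo ?\<psi>) oo (fps_const v * fps_X) = ((f oo ?\<psi>) oo lin) oo (brk v oo ?\<psi>)"
    using fps_inv_lin_nth_0 v0 lin_nth_0 by (simp add: fps_compose_assoc)
  also have "(f oo ?\<psi>) oo lin = f"
    using fps_compose_assoc[OF lin_nth_0 fps_inv_lin_nth_0, of f]
    by (simp add: fps_inv_lin_compose_lin)
  also have "f oo (brk v oo ?\<psi>) = f oo ?\<psi>"
    using fps_compose_assoc[OF fps_inv_lin_nth_0 v0, of f] inv v by simp
  finally show ?thesis .
qed

lemma invariant_eq_compose_lin_power:
  assumes "\<forall>v\<in>\<mu>. f oo brk v = f"
  shows "\<exists>h. f = h oo lin ^ d"
proof -
  let ?g = "f oo fps_inv lin"
  let ?h = "Abs_fps (\<lambda>m. ?g $ (m * d))"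
  have Xd0: "(fps_X ^ d :: 'a fps) $ 0 = 0"
    using d_pos by simp
  have "?g = ?h oo fps_X ^ d"
    using d_pos card_mu invariant_compose_fps_inv_lin[OF assms]
    by (intro fps_compose_X_power_if_roots_of_unity_invariant) auto
  then have "?g oo lin = ?h oo (fps_X ^ d oo lin)"
    using fps_compose_assoc[OF lin_nth_0 Xd0] by simp
  moreover have "?g oo lin = f"
    using fps_compose_assoc[OF lin_nth_0 fps_inv_lin_nth_0, of f]
    by (simp add: fps_inv_lin_compose_lin)
  ultimately show ?thesis
    using fps_X_power_compose[OF lin_nth_0] by auto
qed

lemma invariant_eq_compose_R:
  assumes "\<forall>v\<in>\<mu>. f oo brk v = f"
  shows "\<exists>G. f = G oo R"
proof -
  obtain k where k: "f = k oo lin ^ d"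
    using invariant_eq_compose_lin_power[OF assms] by blast
  obtain h where h: "R = h oo lin ^ d"
    using invariant_eq_compose_lin_power R_compose_brk_mu by blast
  have h0: "h $ 0 = 0"
    using R_nth_0 h by (metis fps_compose_nth_0)
  have "R $ d = h $ 1 * (lin ^ d) $ d"
    using fps_compose_nth_subdegree_inner[of "lin ^ d" h] d_pos h by (simp add: subdegree_lin)
  also have "(lin ^ d) $ d = 1"
    using startsby_zero_power_nth_same[OF lin_nth_0, of d] lin_nth_1 by simp
  finally have h1: "h $ 1 \<noteq> 0"
    using R_nonzero by (metis mult_1_right nth_subdegree_nonzero subdegree_R)
  have "f = (k oo fps_inv h) oo R"
    unfolding k h using h0 h1 lin_nth_0 d_pos by (intro fps_compose_through_inverse) simp_all
  then show ?thesis ..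
qed

lemma compose_R_cancel: "G1 oo R = G2 oo R \<Longrightarrow> G1 = G2"
  using fps_compose_right_cancel R_nth_0 R_nonzero by blast

lemma ex1_compose_R_eq_R_compose_brk:
  assumes "a \<in> OF"
  shows "\<exists>!G. G oo R = R oo brk a"
proof -
  obtain G where "R oo brk a = G oo R"
    using invariant_eq_compose_R R_compose_brk_invariant[OF assms] by blast
  then show ?thesis
    using compose_R_cancel by (intro ex1I[of _ G]) auto
qed

lemma Gamma_compose_R: "a \<in> OF \<Longrightarrow> \<Gamma> a oo R = R oo brk a"
  unfolding Gamma_def by (rule theI'[OF ex1_compose_R_eq_R_compose_brk])

lemma Gamma_nth_0: "a \<in> OF \<Longrightarrow> \<Gamma> a $ 0 = 0"
  using Gamma_compose_R[of a] R_nth_0 by (metis fps_compose_nth_0)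

lemma Gamma_mult:
  assumes a: "a \<in> OF" and b: "b \<in> OF"
  shows "\<Gamma> a oo \<Gamma> b = \<Gamma> (a * b)"
proof (rule compose_R_cancel)
  have a0: "brk a $ 0 = 0" and b0: "brk b $ 0 = 0"
    using a b by (simp_all add: brk_nth_0)
  have "(\<Gamma> a oo \<Gamma> b) oo R = \<Gamma> a oo (\<Gamma> b oo R)"
    using fps_compose_assoc[OF R_nth_0 Gamma_nth_0[OF b]] by simp
  also have "\<dots> = (\<Gamma> a oo R) oo brk b"
    using fps_compose_assoc[OF b0 R_nth_0] by (simp add: Gamma_compose_R[OF b])
  also have "\<dots> = R oo (brk a oo brk b)"
    using fps_compose_assoc[OF b0 a0] by (simp add: Gamma_compose_R[OF a])
  also have "\<dots> = \<Gamma> (a * b) oo R"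
    using a b by (simp add: Gamma_compose_R mult_mem brk_mult)
  finally show "(\<Gamma> a oo \<Gamma> b) oo R = \<Gamma> (a * b) oo R" .
qed

lemma Gamma_nth_1:
  assumes a: "a \<in> OF"
  shows "\<Gamma> a $ 1 = a ^ d"
proof -
  have "(\<Gamma> a oo R) $ d = \<Gamma> a $ 1 * R $ d"
    using fps_compose_nth_subdegree_inner[of R "\<Gamma> a"] d_pos by (simp add: subdegree_R)
  moreover have "(R oo brk a) $ d = R $ d * a ^ d"
    using fps_compose_nth_subdegree_outer[of "brk a" R] brk_nth_0[OF a] brk_nth_1[OF a]
    by (simp add: subdegree_R)
  moreover have "R $ d \<noteq> 0"
    using R_nonzero by (metis nth_subdegree_nonzero subdegree_R)
  ultimately show ?thesis
    using Gamma_compose_R[OF a] by simp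
qed

end

theorem mainTheorem6:
  fixes OF :: "'a::field_char_0 set" and brk :: "'a \<Rightarrow> 'a fps" and d :: nat
  assumes subring: "0 \<in> OF" "1 \<in> OF" "\<forall>x\<in>OF. \<forall>y\<in>OF. x + y \<in> OF \<and> x * y \<in> OF \<and> - x \<in> OF"
    and brk_const: "\<forall>a\<in>OF. fps_nth (brk a) 0 = 0"
    and brk_lin: "\<forall>a\<in>OF. fps_nth (brk a) 1 = a"
    and brk_mult: "\<forall>a\<in>OF. \<forall>b\<in>OF. brk (a * b) = fps_compose (brk a) (brk b)"
    and d_pos: "d \<ge> 1"
    and mu_card: "card (roots_of_unity OF d) = d"
  shows "(\<forall>a\<in>OF. \<exists>!G. fps_compose G (R_series brk OF d) = fps_compose (R_series brk OF d) (brk a))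
    \<and> (\<forall>a\<in>OF. fps_compose (R_series brk OF d) (brk a)
              = (\<Prod>w\<in>roots_of_unity OF d. fps_compose (brk a) (brk w)))
    \<and> (\<forall>a\<in>OF. \<forall>b\<in>OF. fps_compose (Gamma brk OF d a) (Gamma brk OF d b) = Gamma brk OF d (a * b))
    \<and> (\<forall>a\<in>OF. fps_nth (fps_deriv (Gamma brk OF d a)) 0 = a ^ d)"
proof -
  interpret formal_endomorphism_family OF brk d
    by unfold_locales (use assms in auto)
  show ?thesis
  proof (intro conjI ballI)
    fix a assume a: "a \<in> OF"
    show "\<exists>!G. G oo R = R oo brk a"
      using a by (rule ex1_compose_R_eq_R_compose_brk)
    show "R oo brk a = (\<Prod>w\<in>\<mu>. brk a oo brk w)"
      using a by (rule R_compose_brk)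
    show "fps_deriv (\<Gamma> a) $ 0 = a ^ d"
      using Gamma_nth_1[OF a] by (simp add: fps_deriv_nth)
    fix b assume "b \<in> OF"
    with a show "\<Gamma> a oo \<Gamma> b = \<Gamma> (a * b)"
      by (rule Gamma_mult)
  qed
qed

end
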